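(* Let $\lambda\in\mathcal O$ be a nonzero limit ordinal and $\mathcal A,\mathcal B:\mathcal O\to\mathrm{SAT}$. Then, with $\liminf,\limsup$ computed in the lattice $\mathrm{SAT}$ of saturated sets, (a) $\limsup_{\alpha\to\lambda}(\mathcal A(\alpha)\boxplus\mathcal B(\alpha))\subseteq(\limsup_\lambda\mathcal A)\boxplus(\limsup_\lambda\mathcal B)$ and $(\liminf_\lambda\mathcal A)\boxplus(\liminf_\lambda\mathcal B)\subseteq\liminf_{\alpha\to\lambda}(\mathcal A(\alpha)\boxplus\mathcal B(\alpha))$; (b) the same two inclusions hold with $\boxtimes$ in place of $\boxplus$; (c) $\limsup_{\alpha\to\lambda}\mathcal A(\alpha)^\mu\subseteq(\limsup_\lambda\mathcal A)^\mu$ and $(\liminf_\lambda\mathcal A)^\mu\subseteq\liminf_{\alpha\to\lambda}\mathcal A(\alpha)^\mu$; (d) $\limsup_{\alpha\to\lambda}\mathcal A(\alpha)^\nu\subseteq(\limsup_\lambda\mathcal A)^\nu$ and $(\liminf_\lambda\mathcal A)^\nu\subseteq\liminf_{\alpha\to\lambda}\mathcal A(\alpha)^\nu$.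
   Context: $\mathcal O$ is the set of ordinals $\le\top_{\mathsf{ord}}$ for a fixed ordinal $\top_{\mathsf{ord}}$ ($=\beth_\omega$). For $f:\mathcal O\to\mathfrak L$ into a complete lattice and a nonzero limit $\lambda\in\mathcal O$: $\liminf_{\alpha\to\lambda}f(\alpha)=\sup_{\alpha_0<\lambda}\inf_{\alpha_0\le\alpha<\lambda}f(\alpha)$, $\limsup_{\alpha\to\lambda}f(\alpha)=\inf_{\alpha_0<\lambda}\sup_{\alpha_0\le\alpha<\lambda}f(\alpha)$. Terms: $r,s,t::=c\mid x\mid\lambda x\,t\mid r\,s$, with constants $c::=\langle\rangle\mid\mathsf{pair}\mid\mathsf{fst}\mid\mathsf{snd}\mid\mathsf{inl}\mid\mathsf{inr}\mid\mathsf{case}\mid\mathsf{in}\mid\mathsf{out}\mid\mathsf{fix}^\mu_n\mid\mathsf{fix}^\nu_n$ ($n\in\mathbb N$); $t_{1..n}$ abbreviates $t_1\dots t_n$. Evaluation frames: $e(\_)::=\_\,s\mid\mathsf{fst}\,\_\mid\mathsf{snd}\,\_\mid\mathsf{case}\,\_\mid\mathsf{out}\,\_\mid\mathsf{fix}^\mu_n\,s\,t_{1..n}\,\_$; evaluation contexts $E$ are finite (possibly empty) compositions of frames. Reduction $\longrightarrow$ is the closure under all term constructs of: $(\lambda x t)s\to[s/x]t$; $\mathsf{fst}(\mathsf{pair}\,r\,s)\to r$; $\mathsf{snd}(\mathsf{pair}\,r\,s)\to s$; $\mathsf{case}(\mathsf{inl}\,r)\to\lambda x\lambda y.x\,r$;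 $\mathsf{case}(\mathsf{inr}\,r)\to\lambda x\lambda y.y\,r$ ($x,y\notin FV(r)$); $\mathsf{out}(\mathsf{in}\,r)\to r$; $\mathsf{fix}^\mu_n\,s\,t_{1..n}(\mathsf{in}\,t)\to s(\mathsf{fix}^\mu_n s)t_{1..n}(\mathsf{in}\,t)$; $\mathsf{out}(\mathsf{fix}^\nu_n s\,t_{1..n})\to\mathsf{out}(s(\mathsf{fix}^\nu_n s)t_{1..n})$. $\mathsf S$ = strongly normalizing terms. Safe reduction $\rhd$ is the least relation closed under evaluation contexts and transitivity containing: $(\lambda x t)s\rhd[s/x]t$ if $s\in\mathsf S$; $\mathsf{fst}(\mathsf{pair}\,r\,s)\rhd r$ if $s\in\mathsf S$; $\mathsf{snd}(\mathsf{pair}\,r\,s)\rhd s$ if $r\in\mathsf S$; $\mathsf{out}(\mathsf{in}\,r)\rhd r$; $\mathsf{case}(\mathsf{inl}\,r)\rhd\lambda x\lambda y.x\,r$; $\mathsf{case}(\mathsf{inr}\,r)\rhd\lambda x\lambda y.y\,r$; $\mathsf{fix}^\mu_n s\,t_{1..n}(\mathsf{in}\,r)\rhd s(\mathsf{fix}^\mu_n s)t_{1..n}(\mathsf{in}\,r)$; $\mathsf{out}(\mathsf{fix}^\nu_n s\,t_{1..n})\rhd\mathsf{out}(s(\mathsf{fix}^\nu_n s)t_{1..n})$. For a term set $\mathcal A$: ${}^{\rhd}\mathcal A=\{t\mid t\in\mathcal A\text{ or }t\rhd t'\in\mathcal A\}$; closure $\overline{\mathcal A}={}^{\rhd}(\mathcal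 A\cup\{E(x)\mid x\text{ variable},E(x)\in\mathsf S\})$; $\mathcal N:=\overline{\emptyset}$. A set $\mathcal A$ is saturated if $\overline{\mathcal A}=\mathcal A$ and $\mathcal N\subseteq\mathcal A\subseteq\mathsf S$; $\mathrm{SAT}$ is the complete lattice of saturated sets ordered by $\subseteq$, with bottom $\mathcal N$, top $\mathsf S$, and infima/suprema of nonempty families given by intersection/union. Operations: $r\cdot\mathcal A=\{r\,s\mid s\in\mathcal A\}$, $e^{-1}\mathcal A=\{r\mid e(r)\in\mathcal A\}$; $\mathcal A\boxplus\mathcal B=\overline{\mathsf{inl}\cdot\mathcal A}\cup\overline{\mathsf{inr}\cdot\mathcal B}$; $\mathcal A\boxtimes\mathcal B=(\mathsf{fst}\,\_)^{-1}\mathcal A\cap(\mathsf{snd}\,\_)^{-1}\mathcal B$; $\mathcal A^\mu=\overline{\mathsf{in}\cdot\mathcal A}$; $\mathcal A^\nu=(\mathsf{out}\,\_)^{-1}\mathcal A$. *)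

theory Defs
  imports Main
begin

datatype const = CUnit | CPair | CFst | CSnd | CInl | CInr | CCase | CIn | COut
  | FixMu nat | FixNu nat

datatype trm = C const | Var nat | Lam trm | App trm trm

definition apps :: "trm \<Rightarrow> trm list \<Rightarrow> trm" where
  "apps r ts = foldl App r ts"

fun lift :: "nat \<Rightarrow> trm \<Rightarrow> trm" where
  "lift k (C c) = C c"
| "lift k (Var i) = (if i < k then Var i else Var (Suc i))"
| "lift k (Lam t) = Lam (lift (Suc k) t)"
| "lift k (App r s) = App (lift k r) (lift k s)"

fun subst :: "trm \<Rightarrow> nat \<Rightarrow> trm \<Rightarrow> trm" where
  "subst (C c) k s = C c"
| "subst (Var i) k s = (if i < k then Var i else if i = k then s else Var (i - 1))"
| "subst (Lam t) k s = Lam (subst t (Suc k) (lift 0 s))"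
| "subst (App r t) k s = App (subst r k s) (subst t k s)"

text \<open>\<open>\<lambda>x \<lambda>y. x r\<close> and \<open>\<lambda>x \<lambda>y. y r\<close> with x,y not free in r.\<close>
definition caseL :: "trm \<Rightarrow> trm" where
  "caseL r = Lam (Lam (App (Var 1) (lift 0 (lift 0 r))))"
definition caseR :: "trm \<Rightarrow> trm" where
  "caseR r = Lam (Lam (App (Var 0) (lift 0 (lift 0 r))))"

inductive red :: "trm \<Rightarrow> trm \<Rightarrow> bool" where
  beta: "red (App (Lam t) s) (subst t 0 s)"
| fst: "red (App (C CFst) (App (App (C CPair) r) s)) r"
| snd: "red (App (C CSnd) (App (App (C CPair) r) s)) s"
| caseInl: "red (App (C CCase) (App (C CInl) r)) (caseL r)"
| caseInr: "red (App (C CCase) (App (C CInr) r)) (caseR r)"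
| outIn: "red (App (C COut) (App (C CIn) r)) r"
| fixMu: "length ts = n \<Longrightarrow>
    red (apps (C (FixMu n)) (s # ts @ [App (C CIn) t]))
        (apps s (App (C (FixMu n)) s # ts @ [App (C CIn) t]))"
| fixNu: "length ts = n \<Longrightarrow>
    red (App (C COut) (apps (C (FixNu n)) (s # ts)))
        (App (C COut) (apps s (App (C (FixNu n)) s # ts)))"
| lam: "red t t' \<Longrightarrow> red (Lam t) (Lam t')"
| appL: "red r r' \<Longrightarrow> red (App r s) (App r' s)"
| appR: "red s s' \<Longrightarrow> red (App r s) (App r s')"

definition SN :: "trm set" where
  "SN = {t. Wellfounded.accp (\<lambda>y x. red x y) t}"

datatype frame = FApp trm | FFst | FSnd | FCase | FOut | FFix trm "trm list"

fun plug :: "frame \<Rightarrow> trm \<Rightarrow> trm" where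
  "plug (FApp s) r = App r s"
| "plug FFst r = App (C CFst) r"
| "plug FSnd r = App (C CSnd) r"
| "plug FCase r = App (C CCase) r"
| "plug FOut r = App (C COut) r"
| "plug (FFix s ts) r = apps (C (FixMu (length ts))) (s # ts @ [r])"

fun plugE :: "frame list \<Rightarrow> trm \<Rightarrow> trm" where
  "plugE [] r = r"
| "plugE (e # E) r = plug e (plugE E r)"

inductive sred :: "trm \<Rightarrow> trm \<Rightarrow> bool" where
  beta: "s \<in> SN \<Longrightarrow> sred (App (Lam t) s) (subst t 0 s)"
| fst: "s \<in> SN \<Longrightarrow> sred (App (C CFst) (App (App (C CPair) r) s)) r"
| snd: "r \<in> SN \<Longrightarrow> sred (App (C CSnd) (App (App (C CPair) r) s)) s"
| outIn: "sred (App (C COut) (App (C CIn) r)) r"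
| caseInl: "sred (App (C CCase) (App (C CInl) r)) (caseL r)"
| caseInr: "sred (App (C CCase) (App (C CInr) r)) (caseR r)"
| fixMu: "length ts = n \<Longrightarrow>
    sred (apps (C (FixMu n)) (s # ts @ [App (C CIn) r]))
         (apps s (App (C (FixMu n)) s # ts @ [App (C CIn) r]))"
| fixNu: "length ts = n \<Longrightarrow>
    sred (App (C COut) (apps (C (FixNu n)) (s # ts)))
         (App (C COut) (apps s (App (C (FixNu n)) s # ts)))"
| ctx: "sred t t' \<Longrightarrow> sred (plugE E t) (plugE E t')"
| trans: "sred t t' \<Longrightarrow> sred t' t'' \<Longrightarrow> sred t t''"

definition pre_sred :: "trm set \<Rightarrow> trm set" where
  "pre_sred A = {t. t \<in> A \<or> (\<exists>t'. sred t t' \<and> t' \<in> A)}"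

definition closure :: "trm set \<Rightarrow> trm set" where
  "closure A = pre_sred (A \<union> {plugE E (Var x) | E x. plugE E (Var x) \<in> SN})"

definition Neutral :: "trm set" where
  "Neutral = closure {}"

definition saturated :: "trm set \<Rightarrow> bool" where
  "saturated A \<longleftrightarrow> closure A = A \<and> Neutral \<subseteq> A \<and> A \<subseteq> SN"

definition dot :: "trm \<Rightarrow> trm set \<Rightarrow> trm set" where
  "dot r A = {App r s | s. s \<in> A}"

definition frame_inv :: "frame \<Rightarrow> trm set \<Rightarrow> trm set" where
  "frame_inv e A = {r. plug e r \<in> A}"

definition boxplus :: "trm set \<Rightarrow> trm set \<Rightarrow> trm set" where
  "boxplus A B = closure (dot (C CInl) A) \<union> closure (dot (C CInr) B)"

definition boxtimes :: "trm set \<Rightarrow> trm set \<Rightarrow> trm set" where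
  "boxtimes A B = frame_inv FFst A \<inter> frame_inv FSnd B"

definition satmu :: "trm set \<Rightarrow> trm set" where
  "satmu A = closure (dot (C CIn) A)"

definition satnu :: "trm set \<Rightarrow> trm set" where
  "satnu A = frame_inv FOut A"

text \<open>In SAT, infima/suprema of nonempty families are intersections/unions;
  all families below are nonempty when lam is a nonzero limit.\<close>

definition is_nonzero_limit :: "'o::wellorder \<Rightarrow> bool" where
  "is_nonzero_limit lam \<longleftrightarrow> (\<exists>a. a < lam) \<and> (\<forall>a<lam. \<exists>b. a < b \<and> b < lam)"

definition sat_liminf :: "('o::wellorder \<Rightarrow> trm set) \<Rightarrow> 'o \<Rightarrow> trm set" where
  "sat_liminf f lam = (\<Union>a0\<in>{..<lam}. \<Inter>a\<in>{a0..<lam}. f a)"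

definition sat_limsup :: "('o::wellorder \<Rightarrow> trm set) \<Rightarrow> 'o \<Rightarrow> trm set" where
  "sat_limsup f lam = (\<Inter>a0\<in>{..<lam}. \<Union>a\<in>{a0..<lam}. f a)"

end

theory Submission
  imports Defs
begin

text \<open>Products and \<open>\<nu>\<close>-types are preimages under the destructor frames, and preimages
  commute with the unions and intersections defining limsup and liminf. For sums and
  \<open>\<mu>\<close>-types the liminf inclusion is monotonicity of the closure. The limsup inclusion rests on
  determinism: safe reduction is contained in the transitive closure of one-step weak head
  reduction, which is deterministic and gets stuck at constructor applications. So a
  non-neutral term that lies in the closure of \<open>inl \<cdot> A(\<alpha>)\<close> for cofinally many \<open>\<alpha>\<close> reduces to
  \<open>inl s\<close> for a single \<open>s\<close>, which therefore lies in \<open>A(\<alpha>)\<close> cofinally often. For sums, linearity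
  of the order ensures that one of the alternatives \<open>inl\<close>, \<open>inr\<close> occurs cofinally often.\<close>

inductive whr :: "trm \<Rightarrow> trm \<Rightarrow> bool" where
  beta: "s \<in> SN \<Longrightarrow> whr (App (Lam t) s) (subst t 0 s)"
| fst: "s \<in> SN \<Longrightarrow> whr (App (C CFst) (App (App (C CPair) r) s)) r"
| snd: "r \<in> SN \<Longrightarrow> whr (App (C CSnd) (App (App (C CPair) r) s)) s"
| outIn: "whr (App (C COut) (App (C CIn) r)) r"
| caseInl: "whr (App (C CCase) (App (C CInl) r)) (caseL r)"
| caseInr: "whr (App (C CCase) (App (C CInr) r)) (caseR r)"
| fixMu: "length ts = n \<Longrightarrow>
    whr (apps (C (FixMu n)) (s # ts @ [App (C CIn) r]))
        (apps s (App (C (FixMu n)) s # ts @ [App (C CIn) r]))"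
| fixNu: "length ts = n \<Longrightarrow>
    whr (App (C COut) (apps (C (FixNu n)) (s # ts)))
        (App (C COut) (apps s (App (C (FixNu n)) s # ts)))"
| frame: "whr t t' \<Longrightarrow> whr (plug e t) (plug e t')"

lemma apps_Nil [simp]: "apps r [] = r"
  by (simp add: apps_def)

lemma apps_snoc [simp]: "apps r (ts @ [x]) = App (apps r ts) x"
  by (simp add: apps_def)

lemma apps_Cons_snoc [simp]: "apps r (s # ts @ [x]) = App (apps r (s # ts)) x"
  by (simp add: apps_def)

lemma apps_C_eq_App_iff:
  "apps (C c) xs = App a b \<longleftrightarrow> (\<exists>ys. xs = ys @ [b] \<and> a = apps (C c) ys)"
  "App a b = apps (C c) xs \<longleftrightarrow> (\<exists>ys. xs = ys @ [b] \<and> a = apps (C c) ys)"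
  by (cases xs rule: rev_cases; auto)+

lemma apps_C_inject [simp]: "apps (C c) xs = apps (C d) ys \<longleftrightarrow> c = d \<and> xs = ys"
proof (induction xs arbitrary: ys rule: rev_induct)
  case Nil then show ?case by (cases ys rule: rev_cases) auto
next
  case snoc then show ?case by (cases ys rule: rev_cases) auto
qed

lemma apps_C_neq [simp]:
  "apps (C c) xs = C d \<longleftrightarrow> xs = [] \<and> c = d"
  "C d = apps (C c) xs \<longleftrightarrow> xs = [] \<and> c = d"
  "apps (C c) xs \<noteq> Lam t"
  "Lam t \<noteq> apps (C c) xs"
  by (cases xs rule: rev_cases; auto)+

lemma plug_neq [simp]: "plug e t \<noteq> C c" "C c \<noteq> plug e t" "plug e t \<noteq> Lam u" "Lam u \<noteq> plug e t"
  by (cases e; simp)+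

lemma whr_apps_C_active:
  "whr (apps (C c) xs) u \<Longrightarrow>
     (\<exists>n. c = FixMu n \<and> n + 2 \<le> length xs) \<or> (c \<in> {CFst, CSnd, CCase, COut} \<and> xs \<noteq> [])"
proof (induction xs arbitrary: u rule: rev_induct)
  case Nil then show ?case by (auto elim: whr.cases)
next
  case (snoc x xs)
  from snoc.prems have "whr (App (apps (C c) xs) x) u" by simp
  then show ?case
  proof cases
    case (frame t t' e)
    then show ?thesis
      by (cases e) (auto dest: snoc.IH)
  qed auto
qed

lemma App_eq_plug_iff:
  "App a b = plug e t \<longleftrightarrow> e = FApp b \<and> t = a \<or> b = t \<and>
     (e = FFst \<and> a = C CFst \<or> e = FSnd \<and> a = C CSnd \<or> e = FCase \<and> a = C CCase \<or>
      e = FOut \<and> a = C COut \<or> (\<exists>s ts. e = FFix s ts \<and> a = apps (C (FixMu (length ts))) (s # ts)))"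
  by (cases e) auto

lemma whr_apps_C_stuck:
  "\<not> whr (C c) u"
  "k \<in> {CIn, CInl, CInr} \<Longrightarrow> \<not> whr (App (C k) s) u"
  "\<not> whr (App (App (C CPair) r) s) u"
  "\<not> whr (apps (C (FixMu (length ts))) (s # ts)) u"
  "\<not> whr (apps (C (FixNu n)) xs) u"
  using whr_apps_C_active[of c "[]"] whr_apps_C_active[of k "[s]"]
    whr_apps_C_active[of CPair "[r, s]"] whr_apps_C_active[of "FixMu (length ts)" "s # ts"]
    whr_apps_C_active[of "FixNu n" xs]
  by (auto simp: apps_def)

lemma whr_Lam: "\<not> whr (Lam t) u"
  by (auto elim: whr.cases)

lemma plug_eq_plugD:
  assumes "plug e t = plug e' t'" and "whr t u" and "whr t' u'"
  shows "e = e' \<and> t = t'"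
  using assms by (cases e; cases e') (auto simp: whr_apps_C_stuck)

lemma whr_plugD:
  assumes "whr (plug e t) u" and "whr t t'"
  shows "\<exists>t''. whr t t'' \<and> u = plug e t''"
  using assms(1)
proof cases
  case (frame t1 t1' e1)
  with assms(2) show ?thesis by (metis plug_eq_plugD)
qed (use assms(2) in \<open>cases e; auto simp: whr_apps_C_stuck whr_Lam\<close>)+

lemma whr_deterministic: "whr t u \<Longrightarrow> whr t v \<Longrightarrow> u = v"
proof (induction arbitrary: v rule: whr.induct)
  case (frame t t' e)
  then show ?case by (metis whr_plugD)
qed (erule whr.cases; auto simp: App_eq_plug_iff apps_C_eq_App_iff whr_apps_C_stuck whr_Lam)+

lemma whr_plugE: "whr t t' \<Longrightarrow> whr (plugE E t) (plugE E t')"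
  by (induction E) (auto intro: whr.frame)

lemma whr_tranclp_plugE: "whr\<^sup>+\<^sup>+ t t' \<Longrightarrow> whr\<^sup>+\<^sup>+ (plugE E t) (plugE E t')"
  by (induction rule: tranclp_induct) (auto intro: whr_plugE tranclp.trancl_into_trancl)

lemma sred_imp_whr_tranclp: "sred t u \<Longrightarrow> whr\<^sup>+\<^sup>+ t u"
  by (induction rule: sred.induct) (auto intro: whr.intros whr_tranclp_plugE simp del: apps_Cons_snoc)

lemma right_unique_rtranclp_normal_form_unique:
  assumes "right_unique R" and "R\<^sup>*\<^sup>* x y" and "R\<^sup>*\<^sup>* x z"
    and "\<nexists>u. R y u" and "\<nexists>u. R z u"
  shows "y = z"
proof -
  have "single_valued {(a, b). R a b}"
    using assms(1) by (simp add: right_unique_single_valued_eq[symmetric])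
  from single_valued_confluent[OF this] assms(2,3)
  have "R\<^sup>*\<^sup>* y z \<or> R\<^sup>*\<^sup>* z y"
    by (simp add: rtrancl_def)
  with assms(4,5) show ?thesis
    by (auto elim: converse_rtranclpE)
qed

lemma sred_to_ctor_unique:
  assumes "k \<in> {CIn, CInl, CInr}"
    and "sred\<^sup>=\<^sup>= t (App (C k) s)" and "sred\<^sup>=\<^sup>= t (App (C k) s')"
  shows "s = s'"
proof -
  have "right_unique whr"
    by (auto intro: right_uniqueI whr_deterministic)
  moreover have "whr\<^sup>*\<^sup>* t (App (C k) s)" "whr\<^sup>*\<^sup>* t (App (C k) s')"
    using assms(2,3) by (auto dest!: sred_imp_whr_tranclp)
  ultimately show ?thesis
    using assms(1) by (auto dest: right_unique_rtranclp_normal_form_unique simp: whr_apps_C_stuck)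
qed

lemma mem_closure_dot_iff:
  "t \<in> closure (dot r X) \<longleftrightarrow> t \<in> Neutral \<or> (\<exists>s\<in>X. sred\<^sup>=\<^sup>= t (App r s))"
  unfolding closure_def Neutral_def pre_sred_def dot_def by blast

lemma mem_sat_limsup_iff:
  "x \<in> sat_limsup F lam \<longleftrightarrow> (\<forall>b<lam. \<exists>a. b \<le> a \<and> a < lam \<and> x \<in> F a)"
  unfolding sat_limsup_def
  by (simp only: INT_iff UN_iff lessThan_iff atLeastLessThan_iff Ball_def Bex_def) blast

lemma mem_sat_liminf_iff:
  "x \<in> sat_liminf F lam \<longleftrightarrow> (\<exists>b<lam. \<forall>a. b \<le> a \<and> a < lam \<longrightarrow> x \<in> F a)"
  unfolding sat_liminf_def
  by (simp only: INT_iff UN_iff lessThan_iff atLeastLessThan_iff Ball_def Bex_def)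

lemma sat_limsup_frame_inv: "sat_limsup (\<lambda>a. frame_inv e (F a)) lam = frame_inv e (sat_limsup F lam)"
  unfolding sat_limsup_def frame_inv_def by auto

lemma sat_liminf_frame_inv: "sat_liminf (\<lambda>a. frame_inv e (F a)) lam = frame_inv e (sat_liminf F lam)"
  unfolding sat_liminf_def frame_inv_def by auto

lemma sat_limsup_Int_subset: "sat_limsup (\<lambda>a. F a \<inter> G a) lam \<subseteq> sat_limsup F lam \<inter> sat_limsup G lam"
  unfolding sat_limsup_def by auto

lemma sat_liminf_Int: "sat_liminf (\<lambda>a. F a \<inter> G a) lam = sat_liminf F lam \<inter> sat_liminf G lam"
proof
  show "sat_liminf F lam \<inter> sat_liminf G lam \<subseteq> sat_liminf (\<lambda>a. F a \<inter> G a) lam"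
  proof
    fix x assume "x \<in> sat_liminf F lam \<inter> sat_liminf G lam"
    then obtain b1 b2 where "b1 < lam" "\<forall>a. b1 \<le> a \<and> a < lam \<longrightarrow> x \<in> F a"
      and "b2 < lam" "\<forall>a. b2 \<le> a \<and> a < lam \<longrightarrow> x \<in> G a"
      unfolding Int_iff mem_sat_liminf_iff by blast
    then show "x \<in> sat_liminf (\<lambda>a. F a \<inter> G a) lam"
      unfolding mem_sat_liminf_iff by (intro exI[of _ "max b1 b2"]) auto
  qed
qed (unfold sat_liminf_def, blast)

lemma sat_limsup_Un_subset: "sat_limsup (\<lambda>a. F a \<union> G a) lam \<subseteq> sat_limsup F lam \<union> sat_limsup G lam"
proof
  fix x assume x: "x \<in> sat_limsup (\<lambda>a. F a \<union> G a) lam"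
  show "x \<in> sat_limsup F lam \<union> sat_limsup G lam"
  proof (cases "x \<in> sat_limsup F lam")
    case False
    then obtain b0 where "b0 < lam" and b0: "\<And>a. b0 \<le> a \<Longrightarrow> a < lam \<Longrightarrow> x \<notin> F a"
      unfolding mem_sat_limsup_iff by blast
    have "\<exists>a. b \<le> a \<and> a < lam \<and> x \<in> G a" if "b < lam" for b
    proof -
      from x obtain a where "max b b0 \<le> a" "a < lam" "x \<in> F a \<union> G a"
        using \<open>b < lam\<close> \<open>b0 < lam\<close> unfolding mem_sat_limsup_iff by (meson max_less_iff_conj)
      with b0 show ?thesis
        by auto
    qed
    then have "x \<in> sat_limsup G lam"
      unfolding mem_sat_limsup_iff by blast
    then show ?thesis ..
  qed simp
qed

lemma sat_liminf_Un_subset: "sat_liminf F lam \<union> sat_liminf G lam \<subseteq> sat_liminf (\<lambda>a. F a \<union> G a) lam"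
  unfolding sat_liminf_def by auto

lemma sat_limsup_closure_dot_ctor:
  assumes "\<exists>a. a < lam" and k: "k \<in> {CIn, CInl, CInr}"
  shows "sat_limsup (\<lambda>a. closure (dot (C k) (F a))) lam \<subseteq> closure (dot (C k) (sat_limsup F lam))"
proof
  fix t assume t: "t \<in> sat_limsup (\<lambda>a. closure (dot (C k) (F a))) lam"
  show "t \<in> closure (dot (C k) (sat_limsup F lam))"
  proof (cases "t \<in> Neutral")
    case False
    then have reach: "\<exists>s\<in>F a. sred\<^sup>=\<^sup>= t (App (C k) s)"
      if "t \<in> closure (dot (C k) (F a))" for a
      using that unfolding mem_closure_dot_iff by blast
    obtain s where s: "sred\<^sup>=\<^sup>= t (App (C k) s)"
      using t assms(1) reach unfolding mem_sat_limsup_iff by blast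
    have "s \<in> sat_limsup F lam"
      unfolding mem_sat_limsup_iff
    proof (intro allI impI)
      fix b assume "b < lam"
      then obtain a where a: "b \<le> a" "a < lam" "t \<in> closure (dot (C k) (F a))"
        using t unfolding mem_sat_limsup_iff by blast
      with reach obtain s' where "s' \<in> F a" "sred\<^sup>=\<^sup>= t (App (C k) s')"
        by blast
      with sred_to_ctor_unique[OF k s] a show "\<exists>a. b \<le> a \<and> a < lam \<and> s \<in> F a"
        by blast
    qed
    with s show ?thesis
      unfolding mem_closure_dot_iff by blast
  qed (simp add: mem_closure_dot_iff)
qed

lemma closure_dot_sat_liminf:
  assumes "\<exists>a. a < lam"
  shows "closure (dot r (sat_liminf F lam)) \<subseteq> sat_liminf (\<lambda>a. closure (dot r (F a))) lam"
proof
  fix t assume "t \<in> closure (dot r (sat_liminf F lam))"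
  then consider "t \<in> Neutral" | s where "s \<in> sat_liminf F lam" "sred\<^sup>=\<^sup>= t (App r s)"
    unfolding mem_closure_dot_iff by blast
  then show "t \<in> sat_liminf (\<lambda>a. closure (dot r (F a))) lam"
  proof cases
    case 1
    with assms show ?thesis
      unfolding mem_sat_liminf_iff mem_closure_dot_iff by blast
  next
    case 2
    then show ?thesis
      unfolding mem_sat_liminf_iff mem_closure_dot_iff by blast
  qed
qed

lemma sat_limsup_boxplus_subset:
  assumes "\<exists>a. a < lam"
  shows "sat_limsup (\<lambda>a. boxplus (A a) (B a)) lam \<subseteq> boxplus (sat_limsup A lam) (sat_limsup B lam)"
proof -
  have "sat_limsup (\<lambda>a. boxplus (A a) (B a)) lam
      \<subseteq> sat_limsup (\<lambda>a. closure (dot (C CInl) (A a))) lam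
        \<union> sat_limsup (\<lambda>a. closure (dot (C CInr) (B a))) lam"
    unfolding boxplus_def by (rule sat_limsup_Un_subset)
  also have "\<dots> \<subseteq> boxplus (sat_limsup A lam) (sat_limsup B lam)"
    unfolding boxplus_def
    using sat_limsup_closure_dot_ctor[OF assms, of CInl A] sat_limsup_closure_dot_ctor[OF assms, of CInr B]
    by blast
  finally show ?thesis .
qed

lemma boxplus_sat_liminf_subset:
  assumes "\<exists>a. a < lam"
  shows "boxplus (sat_liminf A lam) (sat_liminf B lam) \<subseteq> sat_liminf (\<lambda>a. boxplus (A a) (B a)) lam"
proof -
  have "boxplus (sat_liminf A lam) (sat_liminf B lam)
      \<subseteq> sat_liminf (\<lambda>a. closure (dot (C CInl) (A a))) lam
        \<union> sat_liminf (\<lambda>a. closure (dot (C CInr) (B a))) lam"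
    unfolding boxplus_def
    using closure_dot_sat_liminf[OF assms, of "C CInl" A] closure_dot_sat_liminf[OF assms, of "C CInr" B]
    by blast
  also have "\<dots> \<subseteq> sat_liminf (\<lambda>a. boxplus (A a) (B a)) lam"
    unfolding boxplus_def by (rule sat_liminf_Un_subset)
  finally show ?thesis .
qed

lemma sat_limsup_boxtimes_subset:
  "sat_limsup (\<lambda>a. boxtimes (A a) (B a)) lam \<subseteq> boxtimes (sat_limsup A lam) (sat_limsup B lam)"
  unfolding boxtimes_def sat_limsup_frame_inv[symmetric] by (rule sat_limsup_Int_subset)

lemma sat_liminf_boxtimes:
  "sat_liminf (\<lambda>a. boxtimes (A a) (B a)) lam = boxtimes (sat_liminf A lam) (sat_liminf B lam)"
  unfolding boxtimes_def by (simp add: sat_liminf_Int sat_liminf_frame_inv)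

lemma sat_limsup_satmu_subset:
  "\<exists>a. a < lam \<Longrightarrow> sat_limsup (\<lambda>a. satmu (A a)) lam \<subseteq> satmu (sat_limsup A lam)"
  unfolding satmu_def by (rule sat_limsup_closure_dot_ctor) simp_all

lemma satmu_sat_liminf_subset:
  "\<exists>a. a < lam \<Longrightarrow> satmu (sat_liminf A lam) \<subseteq> sat_liminf (\<lambda>a. satmu (A a)) lam"
  unfolding satmu_def by (rule closure_dot_sat_liminf)

lemma sat_limsup_satnu: "sat_limsup (\<lambda>a. satnu (A a)) lam = satnu (sat_limsup A lam)"
  unfolding satnu_def by (rule sat_limsup_frame_inv)

lemma sat_liminf_satnu: "sat_liminf (\<lambda>a. satnu (A a)) lam = satnu (sat_liminf A lam)"
  unfolding satnu_def by (rule sat_liminf_frame_inv)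

theorem lemma4p6:
  fixes lam :: "'o::wellorder" and A B :: "'o \<Rightarrow> trm set"
  assumes "is_nonzero_limit lam"
    and "\<And>a. saturated (A a)" and "\<And>a. saturated (B a)"
  shows "(sat_limsup (\<lambda>a. boxplus (A a) (B a)) lam
           \<subseteq> boxplus (sat_limsup A lam) (sat_limsup B lam))
     \<and> (boxplus (sat_liminf A lam) (sat_liminf B lam)
           \<subseteq> sat_liminf (\<lambda>a. boxplus (A a) (B a)) lam)
     \<and> (sat_limsup (\<lambda>a. boxtimes (A a) (B a)) lam
           \<subseteq> boxtimes (sat_limsup A lam) (sat_limsup B lam))
     \<and> (boxtimes (sat_liminf A lam) (sat_liminf B lam)
           \<subseteq> sat_liminf (\<lambda>a. boxtimes (A a) (B a)) lam)
     \<and> (sat_limsup (\<lambda>a. satmu (A a)) lam \<subseteq> satmu (sat_limsup A lam))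
     \<and> (satmu (sat_liminf A lam) \<subseteq> sat_liminf (\<lambda>a. satmu (A a)) lam)
     \<and> (sat_limsup (\<lambda>a. satnu (A a)) lam \<subseteq> satnu (sat_limsup A lam))
     \<and> (satnu (sat_liminf A lam) \<subseteq> sat_liminf (\<lambda>a. satnu (A a)) lam)"
proof -
  have lam: "\<exists>a. a < lam"
    using assms(1) unfolding is_nonzero_limit_def by blast
  show ?thesis
    using sat_limsup_boxplus_subset[OF lam] boxplus_sat_liminf_subset[OF lam]
      sat_limsup_satmu_subset[OF lam] satmu_sat_liminf_subset[OF lam]
    by (simp add: sat_limsup_boxtimes_subset sat_liminf_boxtimes sat_limsup_satnu sat_liminf_satnu)
qed

end
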